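(* Let $(A,\circ_A)$ be a Leibniz algebra and $(l,r,V)$ a representation of it. Every invertible anti-$\mathcal O$-operator $T:V\to A$ of $(A,\circ_A)$ associated to $(l,r,V)$ is strong.
   Context: All vector spaces are finite-dimensional over a field $\mathbb K$ of characteristic zero. A Leibniz algebra is a vector space $A$ with a multiplication $\circ_A$ satisfying $x\circ_A(y\circ_A z)=(x\circ_A y)\circ_A z+y\circ_A(x\circ_A z)$. A representation of $(A,\circ_A)$ is a triple $(l,r,V)$ with linear maps $l,r:A\to\mathrm{End}(V)$ such that for all $x,y\in A,v\in V$: $l(x\circ_A y)v=l(x)l(y)v-l(y)l(x)v$; $r(x\circ_A y)v=l(x)r(y)v-r(y)l(x)v$; $r(y)l(x)v=-r(y)r(x)v$. An anti-$\mathcal O$-operator of $(A,\circ_A)$ associated to $(l,r,V)$ is a linear map $T:V\to A$ with $(Tu)\circ_A(Tv)=-T\big(l(Tu)v+r(Tv)u\big)$ for all $u,v\in V$; it is strong if moreover $l\big((Tu)\circ_A(Tv)\big)w+r\big((Tu)\circ_A(Tw)\big)v-r\big((Tv)\circ_A(Tw)\big)u=0$ for all $u,v,w\in V$. *)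

theory Defs
  imports Complex_Main
begin

definition fin_dim_vs :: "('k::field \<Rightarrow> 'a::ab_group_add \<Rightarrow> 'a) \<Rightarrow> bool" where
  "fin_dim_vs s \<longleftrightarrow> (\<exists>B. finite_dimensional_vector_space s B)"

definition leibniz_algebra ::
  "('k::field \<Rightarrow> 'a::ab_group_add \<Rightarrow> 'a) \<Rightarrow> ('a \<Rightarrow> 'a \<Rightarrow> 'a) \<Rightarrow> bool" where
  "leibniz_algebra sA m \<longleftrightarrow>
     vector_space sA \<and>
     (\<forall>x. Vector_Spaces.linear sA sA (m x)) \<and>
     (\<forall>y. Vector_Spaces.linear sA sA (\<lambda>x. m x y)) \<and>
     (\<forall>x y z. m x (m y z) = m (m x y) z + m y (m x z))"

definition leibniz_rep ::
  "('k::field \<Rightarrow> 'a::ab_group_add \<Rightarrow> 'a) \<Rightarrow> ('a \<Rightarrow> 'a \<Rightarrow> 'a) \<Rightarrow>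
   ('k \<Rightarrow> 'v::ab_group_add \<Rightarrow> 'v) \<Rightarrow> ('a \<Rightarrow> 'v \<Rightarrow> 'v) \<Rightarrow> ('a \<Rightarrow> 'v \<Rightarrow> 'v) \<Rightarrow> bool" where
  "leibniz_rep sA m sV l r \<longleftrightarrow>
     vector_space sV \<and>
     (\<forall>x. Vector_Spaces.linear sV sV (l x)) \<and>
     (\<forall>x. Vector_Spaces.linear sV sV (r x)) \<and>
     (\<forall>v. Vector_Spaces.linear sA sV (\<lambda>x. l x v)) \<and>
     (\<forall>v. Vector_Spaces.linear sA sV (\<lambda>x. r x v)) \<and>
     (\<forall>x y v. l (m x y) v = l x (l y v) - l y (l x v)) \<and>
     (\<forall>x y v. r (m x y) v = l x (r y v) - r y (l x v)) \<and>
     (\<forall>x y v. r y (l x v) = - r y (r x v))"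

definition anti_O_operator ::
  "('k::field \<Rightarrow> 'a::ab_group_add \<Rightarrow> 'a) \<Rightarrow> ('a \<Rightarrow> 'a \<Rightarrow> 'a) \<Rightarrow>
   ('k \<Rightarrow> 'v::ab_group_add \<Rightarrow> 'v) \<Rightarrow> ('a \<Rightarrow> 'v \<Rightarrow> 'v) \<Rightarrow> ('a \<Rightarrow> 'v \<Rightarrow> 'v) \<Rightarrow>
   ('v \<Rightarrow> 'a) \<Rightarrow> bool" where
  "anti_O_operator sA m sV l r T \<longleftrightarrow>
     Vector_Spaces.linear sV sA T \<and>
     (\<forall>u v. m (T u) (T v) = - T (l (T u) v + r (T v) u))"

definition strong_anti_O_operator ::
  "('k::field \<Rightarrow> 'a::ab_group_add \<Rightarrow> 'a) \<Rightarrow> ('a \<Rightarrow> 'a \<Rightarrow> 'a) \<Rightarrow>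
   ('k \<Rightarrow> 'v::ab_group_add \<Rightarrow> 'v) \<Rightarrow> ('a \<Rightarrow> 'v \<Rightarrow> 'v) \<Rightarrow> ('a \<Rightarrow> 'v \<Rightarrow> 'v) \<Rightarrow>
   ('v \<Rightarrow> 'a) \<Rightarrow> bool" where
  "strong_anti_O_operator sA m sV l r T \<longleftrightarrow>
     anti_O_operator sA m sV l r T \<and>
     (\<forall>u v w. l (m (T u) (T v)) w + r (m (T u) (T w)) v - r (m (T v) (T w)) u = 0)"

end

theory Submission
  imports Defs
begin

text \<open>An anti-\<open>\<O>\<close>-operator T satisfies \<open>Tu \<circ> Tv = T(u \<circ>\<^sub>T v)\<close> for the product
  \<open>u \<circ>\<^sub>T v = -(l(Tu)v + r(Tv)u)\<close> on V, so for injective T the product \<open>\<circ>\<^sub>T\<close> inherits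
  the Leibniz identity from A.  Expanding the Leibniz defect of \<open>\<circ>\<^sub>T\<close> with the
  representation axioms shows that it is twice the defect in the definition of a strong
  anti-\<open>\<O>\<close>-operator, which therefore vanishes in characteristic zero.\<close>

definition anti_O_product ::
  "('a \<Rightarrow> 'v \<Rightarrow> 'v) \<Rightarrow> ('a \<Rightarrow> 'v \<Rightarrow> 'v) \<Rightarrow> ('v \<Rightarrow> 'a) \<Rightarrow> 'v \<Rightarrow> 'v \<Rightarrow> 'v::ab_group_add" where
  "anti_O_product l r T u v = - (l (T u) v + r (T v) u)"

lemma vector_space_add_self_eq_0_iff:
  fixes s :: "'k::field_char_0 \<Rightarrow> 'v::ab_group_add \<Rightarrow> 'v"
    and x :: 'v
  assumes "vector_space s"
  shows "x + x = 0 \<longleftrightarrow> x = 0"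
proof -
  interpret vector_space s by fact
  have "x + x = s 2 x"
    by (metis one_add_one scale_left_distrib scale_one)
  then show ?thesis
    by simp
qed

lemma anti_O_operator_hom:
  assumes "anti_O_operator sA m sV l r T"
  shows "m (T u) (T v) = T (anti_O_product l r T u v)"
proof -
  interpret module_hom sV sA T
    using assms by (simp add: anti_O_operator_def module_hom_iff_linear)
  show ?thesis
    using assms unfolding anti_O_operator_def anti_O_product_def neg by blast
qed

lemma anti_O_product_leibniz:
  assumes "leibniz_algebra sA m" and "anti_O_operator sA m sV l r T" and "inj T"
  shows "anti_O_product l r T u (anti_O_product l r T v w) =
    anti_O_product l r T (anti_O_product l r T u v) w + anti_O_product l r T v (anti_O_product l r T u w)"
proof -
  interpret module_hom sV sA T
    using assms(2) by (simp add: anti_O_operator_def module_hom_iff_linear)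
  have "m (T u) (m (T v) (T w)) = m (m (T u) (T v)) (T w) + m (T v) (m (T u) (T w))"
    using assms(1) unfolding leibniz_algebra_def by blast
  then show ?thesis
    using assms(3) by (simp add: anti_O_operator_hom[OF assms(2)] add[symmetric] inj_eq)
qed

lemma anti_O_product_leibniz_defect:
  assumes "leibniz_rep sA m sV l r" and "anti_O_operator sA m sV l r T"
  shows "anti_O_product l r T u (anti_O_product l r T v w)
      - (anti_O_product l r T (anti_O_product l r T u v) w + anti_O_product l r T v (anti_O_product l r T u w))
    = (l (m (T u) (T v)) w + r (m (T u) (T w)) v - r (m (T v) (T w)) u)
    + (l (m (T u) (T v)) w + r (m (T u) (T w)) v - r (m (T v) (T w)) u)"
proof -
  have hom: "module_hom sV sV (l x)" "module_hom sV sV (r x)" for x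
    using assms(1) by (simp_all add: leibniz_rep_def module_hom_iff_linear)
  note lin = module_hom.add[OF hom(1)] module_hom.neg[OF hom(1)]
    module_hom.add[OF hom(2)] module_hom.neg[OF hom(2)]
  have rep: "l (m x y) z = l x (l y z) - l y (l x z)" "r (m x y) z = l x (r y z) - r y (l x z)"
    "r y (l x z) = - r y (r x z)" for x y z
    using assms(1) by (simp_all add: leibniz_rep_def)
  have T_prod: "T (- (l (T x) y + r (T y) x)) = m (T x) (T y)" for x y
    using anti_O_operator_hom[OF assms(2)] by (simp add: anti_O_product_def)
  have expand_u_vw: "anti_O_product l r T u (anti_O_product l r T v w) =
      l (T u) (l (T v) w) + l (T u) (r (T w) v) - r (m (T v) (T w)) u"
    unfolding anti_O_product_def T_prod lin by simp
  have expand_uv_w: "anti_O_product l r T (anti_O_product l r T u v) w =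
      - l (m (T u) (T v)) w + r (T w) (l (T u) v) + r (T w) (r (T v) u)"
    unfolding anti_O_product_def T_prod lin by simp
  have expand_v_uw: "anti_O_product l r T v (anti_O_product l r T u w) =
      l (T v) (l (T u) w) + l (T v) (r (T w) u) - r (m (T u) (T w)) v"
    unfolding anti_O_product_def T_prod lin by simp
  show ?thesis
    unfolding expand_u_vw expand_uv_w expand_v_uw rep by (simp add: algebra_simps)
qed

lemma inj_anti_O_operator_imp_strong:
  fixes sA :: "'k::field_char_0 \<Rightarrow> 'a::ab_group_add \<Rightarrow> 'a"
    and sV :: "'k \<Rightarrow> 'v::ab_group_add \<Rightarrow> 'v"
  assumes "leibniz_algebra sA m" and "leibniz_rep sA m sV l r"
    and "anti_O_operator sA m sV l r T" and "inj T"
  shows "strong_anti_O_operator sA m sV l r T"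
proof -
  have "vector_space sV"
    using assms(2) by (simp add: leibniz_rep_def)
  have "l (m (T u) (T v)) w + r (m (T u) (T w)) v - r (m (T v) (T w)) u = 0" for u v w
    using anti_O_product_leibniz_defect[OF assms(2,3), of u v w]
      anti_O_product_leibniz[OF assms(1,3,4), of u v w]
      vector_space_add_self_eq_0_iff[OF \<open>vector_space sV\<close>]
    by simp
  then show ?thesis
    using assms(3) by (simp add: strong_anti_O_operator_def)
qed

theorem proposition2p10:
  fixes sA :: "'k::field_char_0 \<Rightarrow> 'a::ab_group_add \<Rightarrow> 'a"
    and m :: "'a \<Rightarrow> 'a \<Rightarrow> 'a"
    and sV :: "'k \<Rightarrow> 'v::ab_group_add \<Rightarrow> 'v"
    and l r :: "'a \<Rightarrow> 'v \<Rightarrow> 'v"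
    and T :: "'v \<Rightarrow> 'a"
  assumes "leibniz_algebra sA m"
    and "fin_dim_vs sA"
    and "fin_dim_vs sV"
    and "leibniz_rep sA m sV l r"
    and "anti_O_operator sA m sV l r T"
    and "bij T"
  shows "strong_anti_O_operator sA m sV l r T"
  using inj_anti_O_operator_imp_strong[OF assms(1,4,5)] bij_is_inj[OF assms(6)] .

end
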